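(* Let $\alpha,\theta,\gamma>0$, let $C_{K,r}=\max\big(4L^2K/(\theta^2\alpha N),\tilde r_2^2(\gamma)\big)$, and assume there is $A>0$ such that every $f\in F$ with $\|f-f^*\|_{L_2}^2=C_{K,r}$ satisfies $\|f-f^*\|_{L_2}^2\le AP\mathcal L_f$, and that $\theta-A^{-1}<-\theta$. Grant (Lip-Conv) and (Conv). Then on the event $\Omega_K$, $$\sup_{f\in F:\|f-f^*\|_{L_2}>\sqrt{C_{K,r}}}\mathrm{MOM}_K(\ell_{f^*}-\ell_f)<-\theta C_{K,r}\quad\text{and}\quad\sup_{f\in F:\|f-f^*\|_{L_2}\le\sqrt{C_{K,r}}}\mathrm{MOM}_K(\ell_{f^*}-\ell_f)\le\theta C_{K,r}.$$
   Context: Setting: $\bar{\mathcal Y}\subset\mathbb R$ convex, $F\subset L_2(\mu)$ a class of measurable functions $\mathcal X\to\bar{\mathcal Y}$, $\ell_f(x,y)=\bar\ell(f(x),y)$, $(X,Y)\sim P$, $X\sim\mu$, $Pg=\mathbb Eg(X,Y)$; $f^*$ unique minimizer of $f\mapsto P\ell_f$ over $F$, $\mathcal L_f=\ell_f-\ell_{f^*}$, $\|g\|_{L_2}=(\mathbb Eg(X)^2)^{1/2}$. (Lip-Conv): there is $L>0$ with $u\mapsto\bar\ell(u,y)$ convex and $L$-Lipschitz for all $y$. (Conv): $F$ convex. Data $(X_i,Y_i)_{i=1}^N$; $K$ divides $N$; blocks $B_1,\dots,B_K$ of size $N/K$ partition $\{1,\dots,N\}$; $P_{B_k}g=\frac KN\sum_{i\in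 B_k}g(X_i,Y_i)$; $\mathrm{MOM}_K(g)$ = median of $(P_{B_k}g)_k$. $\tilde r_2(\gamma)$ is a given positive number (the Rademacher complexity fixed point). Event: $\Omega_K=\{\forall f\in F\text{ with }\|f-f^*\|_{L_2}\le\sqrt{C_{K,r}},\ \exists J\subset\{1,\dots,K\},|J|>K/2,\ \forall k\in J:|(P_{B_k}-P)\mathcal L_f|\le\theta C_{K,r}\}$. *)

theory Defs
  imports "HOL-Analysis.Analysis" "HOL-Probability.Probability"
begin

text \<open>Median of a finite list of reals: the element at position (length div 2)
  of the sorted list (for odd length the usual median; for even length the upper median).\<close>
definition median_list :: "real list \<Rightarrow> real" where
  "median_list xs = sort xs ! (length xs div 2)"

definition block_mean ::
  "nat \<Rightarrow> nat \<Rightarrow> (nat \<Rightarrow> nat set) \<Rightarrow> (nat \<Rightarrow> 'x \<times> real) \<Rightarrow> nat \<Rightarrow> ('x \<times> real \<Rightarrow> real) \<Rightarrow> real"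
  where "block_mean N K B z k g = (real K / real N) * (\<Sum>i\<in>B k. g (z i))"

definition MOM ::
  "nat \<Rightarrow> nat \<Rightarrow> (nat \<Rightarrow> nat set) \<Rightarrow> (nat \<Rightarrow> 'x \<times> real) \<Rightarrow> ('x \<times> real \<Rightarrow> real) \<Rightarrow> real"
  where "MOM N K B z g = median_list (map (\<lambda>k. block_mean N K B z k g) [1..<K+1])"

definition L2norm :: "'x measure \<Rightarrow> ('x \<Rightarrow> real) \<Rightarrow> real" where
  "L2norm \<mu> g = sqrt (\<integral>x. (g x)\<^sup>2 \<partial>\<mu>)"

definition loss :: "(real \<Rightarrow> real \<Rightarrow> real) \<Rightarrow> ('x \<Rightarrow> real) \<Rightarrow> 'x \<times> real \<Rightarrow> real" where
  "loss lbar f = (\<lambda>(x, y). lbar (f x) y)"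

end

theory Submission
  imports Defs
begin

text \<open>Inside the ball of radius \<open>\<surd>C\<close> the event \<open>\<Omega>\<^sub>K\<close> controls the median of
  means directly, since the excess risk \<open>P\<L>\<^sub>f\<close> is nonnegative. Outside, a function \<open>f\<close>
  is pulled back to \<open>f\<^sub>0 = f\<^sup>* + t (f - f\<^sup>*)\<close> on the sphere of radius \<open>\<surd>C\<close>, which lies in
  \<open>F\<close> by convexity. There the curvature assumption gives \<open>P\<L>\<^sub>f\<^sub>0 \<ge> C/A\<close>, so on a majority of
  blocks \<open>P\<^sub>B\<^sub>k\<L>\<^sub>f\<^sub>0 \<ge> C/A - \<theta>C > 0\<close>; convexity of the loss gives \<open>\<L>\<^sub>f\<^sub>0 \<le> t \<L>\<^sub>f\<close>
  pointwise, and as \<open>t < 1\<close> the same lower bound holds for \<open>P\<^sub>B\<^sub>k\<L>\<^sub>f\<close>.\<close>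

lemma median_list_le:
  fixes xs :: "real list"
  assumes "length (filter (\<lambda>x. x \<le> a) xs) > length xs div 2"
  shows "median_list xs \<le> a"
proof (rule ccontr)
  define ys where "ys = sort xs"
  define j where "j = length xs div 2"
  assume "\<not> median_list xs \<le> a"
  then have "a < ys ! j" by (simp add: median_list_def ys_def j_def)
  have "\<forall>x\<in>set (drop j ys). a < x"
  proof
    fix x assume "x \<in> set (drop j ys)"
    then obtain i where "i < length ys - j" "x = ys ! (j + i)"
      by (auto simp: in_set_conv_nth)
    then show "a < x"
      using \<open>a < ys ! j\<close> sorted_nth_mono[of ys j "j + i"]
      by (simp add: ys_def less_diff_conv add.commute)
  qed
  then have "filter (\<lambda>x. x \<le> a) ys = filter (\<lambda>x. x \<le> a) (take j ys)"
    by (metis (no_types, lifting) append_Nil2 append_take_drop_id filter_append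
        filter_empty_conv not_le)
  then have "length (filter (\<lambda>x. x \<le> a) ys) \<le> length (take j ys)"
    by (simp only: length_filter_le)
  then have "length (filter (\<lambda>x. x \<le> a) ys) \<le> j" by simp
  moreover have "length (filter (\<lambda>x. x \<le> a) ys) = length (filter (\<lambda>x. x \<le> a) xs)"
    by (metis mset_filter mset_sort size_mset ys_def)
  ultimately show False using assms by (simp add: j_def)
qed

lemma MOM_le_if_majority_le:
  assumes "J \<subseteq> {1..K}" "real (card J) > real K / 2"
    and "\<forall>k\<in>J. block_mean N K B z k g \<le> a"
  shows "MOM N K B z g \<le> a"
proof -
  let ?h = "\<lambda>k. block_mean N K B z k g"
  have "card J \<le> card {k\<in>{1..K}. ?h k \<le> a}"
    by (rule card_mono) (use assms in auto)
  also have "{k\<in>{1..K}. ?h k \<le> a} = set (filter (\<lambda>k. ?h k \<le> a) [1..<K+1])" by auto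
  also have "card \<dots> = length (filter (\<lambda>k. ?h k \<le> a) [1..<K+1])"
    by (intro distinct_card) simp
  also have "\<dots> = length (filter (\<lambda>x. x \<le> a) (map ?h [1..<K+1]))"
    by (simp add: filter_map o_def del: upt_Suc)
  finally have "length (map ?h [1..<K+1]) div 2 < length (filter (\<lambda>x. x \<le> a) (map ?h [1..<K+1]))"
    using assms(2) by (simp del: upt_Suc)
  then show ?thesis unfolding MOM_def by (rule median_list_le)
qed

lemma block_mean_mono:
  "(\<And>w. g w \<le> h w) \<Longrightarrow> block_mean N K B z k g \<le> block_mean N K B z k h"
  unfolding block_mean_def by (intro mult_left_mono sum_mono) auto

lemma block_mean_cmult:
  "block_mean N K B z k (\<lambda>w. t * g w) = t * block_mean N K B z k g"
  unfolding block_mean_def by (simp add: sum_distrib_left algebra_simps)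

lemma block_mean_diff_commute:
  "block_mean N K B z k (\<lambda>w. g w - h w) = - block_mean N K B z k (\<lambda>w. h w - g w)"
  unfolding block_mean_def by (simp add: sum_subtractf algebra_simps)

lemma L2norm_cmult:
  assumes "0 \<le> t"
  shows "L2norm \<mu> (\<lambda>x. t * g x) = t * L2norm \<mu> g"
  using assms by (simp add: L2norm_def power_mult_distrib real_sqrt_mult)

lemma convex_comb_on_sphere:
  assumes "0 < \<rho>" "\<rho> < L2norm \<mu> (\<lambda>x. f x - h x)"
  obtains t where "0 < t" "t < 1" "L2norm \<mu> (\<lambda>x. ((1 - t) * h x + t * f x) - h x) = \<rho>"
proof
  define t where "t = \<rho> / L2norm \<mu> (\<lambda>x. f x - h x)"
  show "0 < t" "t < 1" using assms by (auto simp: t_def)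
  have "(\<lambda>x. ((1 - t) * h x + t * f x) - h x) = (\<lambda>x. t * (f x - h x))"
    by (auto simp: algebra_simps)
  then have "L2norm \<mu> (\<lambda>x. ((1 - t) * h x + t * f x) - h x) = t * L2norm \<mu> (\<lambda>x. f x - h x)"
    using \<open>0 < t\<close> by (simp add: L2norm_cmult)
  also have "\<dots> = \<rho>" using assms by (simp add: t_def)
  finally show "L2norm \<mu> (\<lambda>x. ((1 - t) * h x + t * f x) - h x) = \<rho>" .
qed

lemma loss_excess_convex_comb:
  assumes "convex_on Ybar (\<lambda>u. lbar u (snd w))"
    and "f (fst w) \<in> Ybar" "h (fst w) \<in> Ybar" "0 \<le> t" "t \<le> 1"
  shows "loss lbar (\<lambda>x. (1 - t) * h x + t * f x) w - loss lbar h w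
           \<le> t * (loss lbar f w - loss lbar h w)"
proof -
  have "lbar ((1 - t) *\<^sub>R h (fst w) + t *\<^sub>R f (fst w)) (snd w)
          \<le> (1 - t) * lbar (h (fst w)) (snd w) + t * lbar (f (fst w)) (snd w)"
    using assms by (intro convex_onD[where f="\<lambda>u. lbar u (snd w)"]) simp_all
  then show ?thesis by (simp add: loss_def case_prod_beta algebra_simps)
qed

lemma MOM_excess_le_deviation:
  assumes "J \<subseteq> {1..K}" "real (card J) > real K / 2"
    and "\<forall>k\<in>J. \<bar>block_mean N K B z k (\<lambda>w. g w - h w) - d\<bar> \<le> b" "0 \<le> d"
  shows "MOM N K B z (\<lambda>w. h w - g w) \<le> b"
proof (rule MOM_le_if_majority_le[OF assms(1,2)], intro ballI)
  fix k assume "k \<in> J"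
  then have "\<bar>block_mean N K B z k (\<lambda>w. g w - h w) - d\<bar> \<le> b" using assms(3) by blast
  then show "block_mean N K B z k (\<lambda>w. h w - g w) \<le> b"
    using assms(4) block_mean_diff_commute[of N K B z k g h] by linarith
qed

lemma MOM_excess_le_of_localized:
  assumes "J \<subseteq> {1..K}" "real (card J) > real K / 2"
    and "\<forall>k\<in>J. \<bar>block_mean N K B z k (\<lambda>w. g\<^sub>0 w - h w) - d\<bar> \<le> b" "b < d"
    and "0 < t" "t \<le> 1" "\<And>w. g\<^sub>0 w - h w \<le> t * (g w - h w)"
  shows "MOM N K B z (\<lambda>w. h w - g w) \<le> b - d"
proof (rule MOM_le_if_majority_le[OF assms(1,2)], intro ballI)
  fix k assume "k \<in> J"
  let ?m = "block_mean N K B z k (\<lambda>w. g w - h w)"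
  have "d - b \<le> block_mean N K B z k (\<lambda>w. g\<^sub>0 w - h w)"
    using assms(3) \<open>k \<in> J\<close> by fastforce
  also have "\<dots> \<le> t * ?m"
    using block_mean_mono[OF assms(7)] by (simp add: block_mean_cmult)
  finally have bound: "d - b \<le> t * ?m" .
  then have "0 < t * ?m" using assms(4) by linarith
  then have "0 < ?m" using assms(5) by (simp add: zero_less_mult_iff)
  then have "t * ?m \<le> ?m" using assms(5,6) by (simp add: mult_left_le_one_le)
  with bound have "d - b \<le> ?m" by linarith
  then show "block_mean N K B z k (\<lambda>w. h w - g w) \<le> b - d"
    using block_mean_diff_commute[of N K B z k h g] by linarith
qed

theorem lemma2:
  fixes M :: "'x measure" and P :: "('x \<times> real) measure"
    and Ybar :: "real set" and F :: "('x \<Rightarrow> real) set" and fstar :: "'x \<Rightarrow> real"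
    and lbar :: "real \<Rightarrow> real \<Rightarrow> real" and Lc :: real
    and N K :: nat and B :: "nat \<Rightarrow> nat set" and z :: "nat \<Rightarrow> 'x \<times> real"
    and \<alpha> \<theta> \<gamma> A :: real and r2 :: "real \<Rightarrow> real" and C :: real
  defines "\<mu> \<equiv> distr P M fst"
  defines "C \<equiv> max (4 * Lc\<^sup>2 * real K / (\<theta>\<^sup>2 * \<alpha> * real N)) ((r2 \<gamma>)\<^sup>2)"
  assumes P_prob: "prob_space P"
    and P_sets: "sets P = sets (M \<Otimes>\<^sub>M borel)"
    and Ybar_convex: "convex Ybar"
    and F_L2: "\<forall>f\<in>F. f \<in> borel_measurable M \<and> (\<forall>x. f x \<in> Ybar) \<and> integrable \<mu> (\<lambda>x. (f x)\<^sup>2)"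
    and F_loss_int: "\<forall>f\<in>F. integrable P (loss lbar f)"
    and fstar_in: "fstar \<in> F"
    and fstar_min: "\<forall>f\<in>F. f \<noteq> fstar \<longrightarrow> (\<integral>w. loss lbar fstar w \<partial>P) < (\<integral>w. loss lbar f w \<partial>P)"
    and Lip_Conv: "Lc > 0" "\<forall>y. convex_on Ybar (\<lambda>u. lbar u y)" "\<forall>y. Lc-lipschitz_on Ybar (\<lambda>u. lbar u y)"
    and Conv: "\<forall>f\<in>F. \<forall>g\<in>F. \<forall>t\<in>{0..1}. (\<lambda>x. (1 - t) * f x + t * g x) \<in> F"
    and N_pos: "0 < N" and K_pos: "0 < K" and K_dvd: "K dvd N"
    and B_part: "(\<Union>k\<in>{1..K}. B k) = {1..N}"
      "\<forall>k\<in>{1..K}. \<forall>k'\<in>{1..K}. k \<noteq> k' \<longrightarrow> B k \<inter> B k' = {}"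
      "\<forall>k\<in>{1..K}. card (B k) = N div K"
    and params: "\<alpha> > 0" "\<theta> > 0" "\<gamma> > 0" "r2 \<gamma> > 0"
    and A_pos: "A > 0"
    and A_cond: "\<forall>f\<in>F. (L2norm \<mu> (\<lambda>x. f x - fstar x))\<^sup>2 = C \<longrightarrow>
        (L2norm \<mu> (\<lambda>x. f x - fstar x))\<^sup>2 \<le> A * (\<integral>w. (loss lbar f w - loss lbar fstar w) \<partial>P)"
    and A_theta: "\<theta> - 1 / A < - \<theta>"
    and Omega_K: "\<forall>f\<in>F. L2norm \<mu> (\<lambda>x. f x - fstar x) \<le> sqrt C \<longrightarrow>
        (\<exists>J \<subseteq> {1..K}. real (card J) > real K / 2 \<and>
           (\<forall>k\<in>J. \<bar>block_mean N K B z k (\<lambda>w. loss lbar f w - loss lbar fstar w)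
                    - (\<integral>w. (loss lbar f w - loss lbar fstar w) \<partial>P)\<bar> \<le> \<theta> * C))"
  shows "(SUP f\<in>{f\<in>F. L2norm \<mu> (\<lambda>x. f x - fstar x) > sqrt C}.
            ereal (MOM N K B z (\<lambda>w. loss lbar fstar w - loss lbar f w))) < ereal (- \<theta> * C)
       \<and> (SUP f\<in>{f\<in>F. L2norm \<mu> (\<lambda>x. f x - fstar x) \<le> sqrt C}.
            ereal (MOM N K B z (\<lambda>w. loss lbar fstar w - loss lbar f w))) \<le> ereal (\<theta> * C)"
proof -
  let ?nrm = "\<lambda>g. L2norm \<mu> (\<lambda>x. g x - fstar x)"
  let ?D = "\<lambda>g. \<integral>w. (loss lbar g w - loss lbar fstar w) \<partial>P"
  let ?MOM = "\<lambda>g. MOM N K B z (\<lambda>w. loss lbar fstar w - loss lbar g w)"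
  have C_pos: "0 < C"
    using params(4) unfolding C_def by (simp add: less_max_iff_disj)
  have excess_nonneg: "0 \<le> ?D g" if "g \<in> F" for g
    using F_loss_int fstar_min fstar_in that
    by (cases "g = fstar") (auto intro: less_imp_le)
  have inside: "?MOM f \<le> \<theta> * C" if "f \<in> F" "?nrm f \<le> sqrt C" for f
    using Omega_K that excess_nonneg[OF that(1)] MOM_excess_le_deviation by blast
  have outside: "?MOM f \<le> \<theta> * C - C / A" if f: "f \<in> F" "sqrt C < ?nrm f" for f
  proof -
    obtain t where t: "0 < t" "t < 1" "?nrm (\<lambda>x. (1 - t) * fstar x + t * f x) = sqrt C"
      using convex_comb_on_sphere[of "sqrt C" \<mu> f fstar] f(2) C_pos by auto
    define f\<^sub>0 where "f\<^sub>0 = (\<lambda>x. (1 - t) * fstar x + t * f x)"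
    have "f\<^sub>0 \<in> F" using Conv fstar_in f(1) t(1,2) by (simp add: f\<^sub>0_def)
    then have "C / A \<le> ?D f\<^sub>0"
      using A_cond t(3) C_pos A_pos by (simp add: f\<^sub>0_def field_simps)
    moreover obtain J where "J \<subseteq> {1..K}" "real (card J) > real K / 2"
      "\<forall>k\<in>J. \<bar>block_mean N K B z k (\<lambda>w. loss lbar f\<^sub>0 w - loss lbar fstar w) - ?D f\<^sub>0\<bar> \<le> \<theta> * C"
      using Omega_K \<open>f\<^sub>0 \<in> F\<close> t(3) by (force simp: f\<^sub>0_def)
    moreover have "\<theta> * C < C / A"
      using mult_strict_right_mono[of \<theta> "1 / A" C] A_theta C_pos params(2) by simp
    ultimately have "?MOM f \<le> \<theta> * C - ?D f\<^sub>0"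
      using t(1,2) F_L2 fstar_in f(1) Lip_Conv(2)
      by (intro MOM_excess_le_of_localized[where t = t and g\<^sub>0 = "loss lbar f\<^sub>0"])
        (auto simp: f\<^sub>0_def intro: loss_excess_convex_comb)
    with \<open>C / A \<le> ?D f\<^sub>0\<close> show ?thesis by linarith
  qed
  have "\<theta> * C - C / A < - \<theta> * C"
    using mult_strict_right_mono[OF A_theta C_pos] by (simp add: algebra_simps)
  with inside outside show ?thesis
    by (intro conjI) (fastforce intro: SUP_least le_less_trans[of _ "ereal (\<theta> * C - C / A)"])+
qed

end
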